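(* Let $h>0$ and $n\ge1$. For $(\theta_1,\dots,\theta_n)\in U=\{(\theta_1,\dots,\theta_n)\in(0,1)^n:1>\theta_1>\theta_2>\cdots>\theta_n>0\}$ let $\Theta\in\mathbb{R}^{n\times n}$ be the matrix with entries $\Theta_{ii}=\frac{1}{4h}\cot(\pi\theta_i)$ and, for $i\neq j$, $\Theta_{ij}=\frac{1}{4h}\left(\cot\left(\pi\frac{\theta_i+\theta_j}{2}\right)-\cot\left(\pi\frac{\theta_i-\theta_j}{2}\right)\right)$. Then the set of $(\theta_1,\dots,\theta_n)\in U$ for which $\Theta$ is not invertible has Lebesgue measure zero. *)

theory Defs
  imports "HOL-Analysis.Analysis" "Jordan_Normal_Form.Matrix"
begin

text \<open>The parameter set U, indices shifted to 0..n-1: 1 > theta 0 > ... > theta (n-1) > 0.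
  Points are extensional functions on the index set, as in the product measure space.\<close>
definition theta_domain :: "nat \<Rightarrow> (nat \<Rightarrow> real) set" where
  "theta_domain n = {\<theta> \<in> PiE {..<n} (\<lambda>_. {0<..<1}).
      \<forall>i j. i < j \<and> j < n \<longrightarrow> \<theta> i > \<theta> j}"

definition Theta_mat :: "real \<Rightarrow> nat \<Rightarrow> (nat \<Rightarrow> real) \<Rightarrow> real mat" where
  "Theta_mat h n \<theta> = mat n n (\<lambda>(i,j).
     if i = j then (1 / (4*h)) * cot (pi * \<theta> i)
     else (1 / (4*h)) * (cot (pi * ((\<theta> i + \<theta> j) / 2)) - cot (pi * ((\<theta> i - \<theta> j) / 2))))"

end

theory Submission
  imports Defs "HOL-Complex_Analysis.Complex_Analysis" "Jordan_Normal_Form.Determinant"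
begin

text \<open>Induction on \<open>n\<close> with Fubini. Fix \<open>\<theta>\<^sub>1 > \<dots> > \<theta>\<^sub>n\<close> with \<open>\<Theta>\<close> invertible and append a
  coordinate \<open>y \<in> (0, \<theta>\<^sub>n)\<close>. Multiplying the last row of the enlarged matrix by \<open>sin (\<pi> y)\<close> removes
  the pole of its diagonal entry \<open>cot (\<pi> y) / (4h)\<close>, so \<open>sin (\<pi> y)\<close> times its determinant extends
  holomorphically to the disc \<open>|y| < \<theta>\<^sub>n\<close>. At \<open>y = 0\<close> the last row becomes \<open>(0, \<dots>, 0, 1/(4h))\<close>,
  so the extension does not vanish identically and has only countably many zeros: for almost
  every \<open>y\<close> the enlarged matrix is again invertible.\<close>

lemma invertible_mat_iff_det_nonzero:
  fixes A :: "'a::field mat"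
  assumes A: "A \<in> carrier_mat n n"
  shows "invertible_mat A \<longleftrightarrow> det A \<noteq> 0"
proof
  assume "invertible_mat A"
  then obtain B where AB: "A * B = 1\<^sub>m n" and BA: "B * A = 1\<^sub>m (dim_row B)"
    using A unfolding invertible_mat_def inverts_mat_def by auto
  have B: "B \<in> carrier_mat n n"
    using arg_cong[OF AB, of dim_col] arg_cong[OF BA, of dim_col] A by auto
  have "det A * det B = 1"
    using det_mult[OF A B] AB by (simp add: det_one)
  then show "det A \<noteq> 0" by auto
next
  assume "det A \<noteq> 0"
  from det_non_zero_imp_unit[OF A this, unfolded Units_def, of "()"]
  obtain B where "B \<in> carrier_mat n n" "B * A = 1\<^sub>m n" "A * B = 1\<^sub>m n"
    by (auto simp: ring_mat_def)
  then show "invertible_mat A"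
    using A unfolding invertible_mat_def inverts_mat_def by auto
qed

lemma det_as_entry_sum:
  assumes "A \<in> carrier_mat n n"
  shows "det A = (\<Sum>p\<in>{p. p permutes {..<n}}. signof p * (\<Prod>i<n. A $$ (i, p i)))"
  using det_def'[OF assms] by (simp add: atLeast0LessThan)

lemma holomorphic_on_det:
  assumes "\<And>z. A z \<in> carrier_mat n n"
    and "\<And>i j. i < n \<Longrightarrow> j < n \<Longrightarrow> (\<lambda>z. A z $$ (i, j)) holomorphic_on S"
  shows "(\<lambda>z. det (A z)) holomorphic_on S"
  unfolding det_as_entry_sum[OF assms(1)]
  by (intro holomorphic_on_sum holomorphic_on_mult holomorphic_on_const holomorphic_on_prod assms(2))
     (use permutes_in_image[of _ "{..<n}"] in auto)

lemma borel_measurable_det: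
  fixes A :: "'a \<Rightarrow> real mat"
  assumes "\<And>x. A x \<in> carrier_mat n n"
    and "\<And>i j. i < n \<Longrightarrow> j < n \<Longrightarrow> (\<lambda>x. A x $$ (i, j)) \<in> borel_measurable M"
  shows "(\<lambda>x. det (A x)) \<in> borel_measurable M"
  unfolding det_as_entry_sum[OF assms(1)]
  by (intro borel_measurable_sum borel_measurable_times borel_measurable_const
      borel_measurable_prod assms(2)) (use permutes_in_image[of _ "{..<n}"] in auto)

lemma null_sets_PiM_Suc_sections:
  fixes M :: "'a measure"
  assumes M: "sigma_finite_measure M"
    and A: "A \<in> sets (PiM {..<Suc n} (\<lambda>_. M))"
    and sections: "AE x in PiM {..<n} (\<lambda>_. M). {y \<in> space M. x(n := y) \<in> A} \<in> null_sets M"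
  shows "A \<in> null_sets (PiM {..<Suc n} (\<lambda>_. M))"
proof -
  interpret product_sigma_finite "\<lambda>_. M"
    using M by (simp add: product_sigma_finite_def)
  have section_integral: "(\<integral>\<^sup>+ y. indicator A (x(n := y)) \<partial>M) = 0"
    if "{y \<in> space M. x(n := y) \<in> A} \<in> null_sets M" for x
  proof -
    have "(\<integral>\<^sup>+ y. indicator A (x(n := y)) \<partial>M)
        = (\<integral>\<^sup>+ y. indicator {y \<in> space M. x(n := y) \<in> A} y \<partial>M)"
      by (rule nn_integral_cong) (simp add: indicator_def)
    then show ?thesis
      using that by (simp add: null_setsD1 null_setsD2)
  qed
  have "emeasure (PiM {..<Suc n} (\<lambda>_. M)) A = (\<integral>\<^sup>+ x. indicator A x \<partial>PiM {..<Suc n} (\<lambda>_. M))"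
    using A by simp
  also have "\<dots> = (\<integral>\<^sup>+ x. (\<integral>\<^sup>+ y. indicator A (x(n := y)) \<partial>M) \<partial>PiM {..<n} (\<lambda>_. M))"
    unfolding lessThan_Suc by (rule product_nn_integral_insert) (use A lessThan_Suc in auto)
  also have "\<dots> = (\<integral>\<^sup>+ x. 0 \<partial>PiM {..<n} (\<lambda>_. M))"
    using sections by (intro nn_integral_cong_AE) (auto elim!: AE_mp intro!: section_integral)
  finally show ?thesis
    using A by (simp add: null_sets_def)
qed

lemma fsigma_ball: "fsigma (ball (a::'a::real_normed_vector) r)"
proof -
  have "ball a r = (\<Union>k. cball a (r - 1 / real (Suc k)))"
  proof (intro equalityI subsetI)
    fix z assume "z \<in> ball a r"
    then have "0 < r - dist a z" by simp
    then obtain k where "1 / real (Suc k) < r - dist a z"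
      using reals_Archimedean by (metis inverse_eq_divide)
    then show "z \<in> (\<Union>k. cball a (r - 1 / real (Suc k)))" by (auto intro!: exI[of _ k])
  next
    fix z assume "z \<in> (\<Union>k. cball a (r - 1 / real (Suc k)))"
    then obtain k where "dist a z \<le> r - 1 / real (Suc k)" by auto
    moreover have "0 < 1 / real (Suc k)" by auto
    ultimately have "dist a z < r" by linarith
    then show "z \<in> ball a r" by simp
  qed
  then show ?thesis
    by (metis closed_cball fsigma.intros)
qed

lemma countable_zeros_ball:
  assumes f: "f holomorphic_on ball a r" and nonzero: "f a \<noteq> 0"
  shows "countable {z \<in> ball a r. f z = 0}"
proof (cases "f constant_on ball a r")
  case True
  then obtain c where c: "\<And>z. z \<in> ball a r \<Longrightarrow> f z = c"
    unfolding constant_on_def by blast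
  have "f z \<noteq> 0" if "z \<in> ball a r" for z
  proof -
    have "0 < r"
      using that by (meson le_less_trans mem_ball zero_le_dist)
    then show ?thesis
      using c that nonzero by auto
  qed
  then have "{z \<in> ball a r. f z = 0} = {}" by blast
  then show ?thesis by (simp only: countable_empty)
next
  case False
  then show ?thesis
    using holomorphic_countable_zeros[OF f open_ball connected_ball fsigma_ball] by blast
qed

lemma sin_pi_half_nonzero:
  fixes w :: complex
  assumes "0 < \<bar>Re w\<bar>" and "\<bar>Re w\<bar> < 2"
  shows "sin (of_real pi * (w / 2)) \<noteq> 0"
proof
  assume "sin (of_real pi * (w / 2)) = 0"
  then obtain k :: int where k: "of_real pi * (w / 2) = of_real (k * pi)"
    unfolding sin_eq_0 by blast
  have "pi * Re w / 2 = Re (of_real pi * (w / 2))" by simp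
  also have "\<dots> = k * pi" using k by simp
  finally have "\<bar>Re w\<bar> = of_int \<bar>2 * k\<bar>" by (simp add: field_simps)
  with assms have "0 < \<bar>2 * k\<bar>" "\<bar>2 * k\<bar> < 2" by simp_all
  then show False by presburger
qed

lemma holomorphic_on_cot_pi_half:
  assumes g: "g holomorphic_on S"
    and "\<And>z. z \<in> S \<Longrightarrow> 0 < \<bar>Re (g z)\<bar> \<and> \<bar>Re (g z)\<bar> < 2"
  shows "(\<lambda>z. cot (of_real pi * (g z / 2))) holomorphic_on S"
proof -
  have arg: "(\<lambda>z. of_real pi * (g z / 2)) holomorphic_on S"
    by (auto intro!: holomorphic_intros g)
  have "(\<lambda>z. cos (of_real pi * (g z / 2)) / sin (of_real pi * (g z / 2))) holomorphic_on S"
    using assms(2) sin_pi_half_nonzero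
    by (intro holomorphic_on_divide holomorphic_on_compose[OF arg holomorphic_on_cos, unfolded o_def]
        holomorphic_on_compose[OF arg holomorphic_on_sin, unfolded o_def]) auto
  then show ?thesis unfolding cot_def .
qed

definition theta_entry :: "real \<Rightarrow> 'a \<Rightarrow> 'a \<Rightarrow> 'a::{real_normed_field,banach}" where
  "theta_entry h a b =
     of_real (1 / (4 * h)) * (cot (of_real pi * ((a + b) / 2)) - cot (of_real pi * ((a - b) / 2)))"

lemma theta_entry_of_real:
  "theta_entry h (of_real a) (of_real b) = (of_real (theta_entry h a b) :: 'a::{real_normed_field,banach})"
  by (simp add: theta_entry_def cot_of_real)

lemma dim_Theta_mat [simp]:
  "dim_row (Theta_mat h n \<theta>) = n" "dim_col (Theta_mat h n \<theta>) = n"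
  by (simp_all add: Theta_mat_def)

lemma Theta_mat_carrier: "Theta_mat h n \<theta> \<in> carrier_mat n n"
  by (rule carrier_matI) simp_all

text \<open>On the diagonal this uses \<open>cot 0 = 0\<close>, a junk value of \<open>cos 0 / sin 0\<close>.\<close>
lemma Theta_mat_index:
  assumes "i < n" and "j < n"
  shows "Theta_mat h n \<theta> $$ (i, j) = theta_entry h (\<theta> i) (\<theta> j)"
  using assms by (simp add: Theta_mat_def theta_entry_def)

lemma theta_domain_Suc_iff:
  assumes "\<theta> \<in> extensional {..<n}"
  shows "\<theta>(n := y) \<in> theta_domain (Suc n) \<longleftrightarrow>
           \<theta> \<in> theta_domain n \<and> 0 < y \<and> y < 1 \<and> (\<forall>j<n. y < \<theta> j)"
  using assms unfolding theta_domain_def PiE_iff by (auto simp: less_Suc_eq extensional_def)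

definition Theta_singular :: "real \<Rightarrow> nat \<Rightarrow> (nat \<Rightarrow> real) set" where
  "Theta_singular h n = {\<theta> \<in> theta_domain n. det (Theta_mat h n \<theta>) = 0}"

lemma sets_Theta_singular: "Theta_singular h n \<in> sets (PiM {..<n} (\<lambda>_. lborel))"
proof -
  have [measurable]: "\<And>k. k < n \<Longrightarrow> (\<lambda>\<theta>. \<theta> k) \<in> borel_measurable (PiM {..<n} (\<lambda>_. lborel))"
    using measurable_component_singleton[of _ "{..<n}" "\<lambda>_. lborel"] by simp
  have "(\<lambda>\<theta>. Theta_mat h n \<theta> $$ (i, j)) \<in> borel_measurable (PiM {..<n} (\<lambda>_. lborel))"
    if "i < n" "j < n" for i j
  proof -
    have "(\<lambda>\<theta>. Theta_mat h n \<theta> $$ (i, j)) = (\<lambda>\<theta>. theta_entry h (\<theta> i) (\<theta> j))"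
      using Theta_mat_index[OF that] by simp
    also have "\<dots> \<in> borel_measurable (PiM {..<n} (\<lambda>_. lborel))"
      unfolding theta_entry_def cot_def using that by measurable
    finally show ?thesis .
  qed
  then have [measurable]: "(\<lambda>\<theta>. det (Theta_mat h n \<theta>)) \<in> borel_measurable (PiM {..<n} (\<lambda>_. lborel))"
    by (rule borel_measurable_det[OF Theta_mat_carrier])
  have singular_eq: "Theta_singular h n = {\<theta> \<in> space (PiM {..<n} (\<lambda>_. lborel)).
      (\<forall>i<n. 0 < \<theta> i \<and> \<theta> i < 1) \<and> (\<forall>i<n. \<forall>j<n. i < j \<longrightarrow> \<theta> j < \<theta> i) \<and>
      det (Theta_mat h n \<theta>) = 0}"
    unfolding Theta_singular_def theta_domain_def space_PiM PiE_iff space_lborel by auto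
  show ?thesis
    unfolding singular_eq by measurable
qed

text \<open>\<open>Theta_mat h (Suc n) (\<theta>(n := z))\<close> for complex \<open>z\<close>, with its last row multiplied by
  \<open>sin (\<pi> z)\<close>; the corner entry is the holomorphic continuation of \<open>sin (\<pi> z) cot (\<pi> z) / (4h)\<close>.\<close>
definition bordered_Theta :: "real \<Rightarrow> nat \<Rightarrow> (nat \<Rightarrow> real) \<Rightarrow> complex \<Rightarrow> complex mat" where
  "bordered_Theta h n \<theta> z = mat (Suc n) (Suc n) (\<lambda>(i, j).
     if i < n then theta_entry h (of_real (\<theta> i)) (if j < n then of_real (\<theta> j) else z)
     else if j < n then sin (of_real pi * z) * theta_entry h z (of_real (\<theta> j))
     else of_real (1 / (4 * h)) * cos (of_real pi * z))"

lemma bordered_Theta_carrier: "bordered_Theta h n \<theta> z \<in> carrier_mat (Suc n) (Suc n)"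
  by (simp add: bordered_Theta_def)

lemma bordered_Theta_of_real:
  assumes "sin (pi * y) \<noteq> 0"
  shows "bordered_Theta h n \<theta> (of_real y) =
           multrow n (of_real (sin (pi * y))) (map_mat of_real (Theta_mat h (Suc n) (\<theta>(n := y))))"
proof (rule eq_matI)
  fix i j
  assume "i < dim_row (multrow n (of_real (sin (pi * y))) (map_mat of_real (Theta_mat h (Suc n) (\<theta>(n := y)))))"
    and "j < dim_col (multrow n (of_real (sin (pi * y))) (map_mat of_real (Theta_mat h (Suc n) (\<theta>(n := y)))))"
  then have ij: "i < Suc n" "j < Suc n" by simp_all
  have T: "Theta_mat h (Suc n) (\<theta>(n := y)) $$ (i, j) = theta_entry h ((\<theta>(n := y)) i) ((\<theta>(n := y)) j)"
    using Theta_mat_index[OF ij] .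
  consider "i < n" | "i = n" "j < n" | "i = n" "j = n"
    using ij by linarith
  then show "bordered_Theta h n \<theta> (of_real y) $$ (i, j) =
      multrow n (of_real (sin (pi * y))) (map_mat of_real (Theta_mat h (Suc n) (\<theta>(n := y)))) $$ (i, j)"
  proof cases
    case 1
    then show ?thesis
      using ij T by (cases "j < n") (auto simp: bordered_Theta_def theta_entry_of_real)
  next
    case 2
    have "sin (of_real pi * of_real y) = (of_real (sin (pi * y)) :: complex)"
      by (simp flip: of_real_mult add: sin_of_real)
    then show ?thesis
      using 2 ij T by (simp add: bordered_Theta_def theta_entry_of_real)
  next
    case 3
    have "cos (of_real pi * of_real y) = (of_real (cos (pi * y)) :: complex)"
      by (simp flip: of_real_mult add: cos_of_real)
    then have "bordered_Theta h n \<theta> (of_real y) $$ (i, j) = of_real (1 / (4 * h) * cos (pi * y))"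
      using 3 by (simp add: bordered_Theta_def)
    also have "1 / (4 * h) * cos (pi * y) = sin (pi * y) * theta_entry h y y"
      using assms by (simp add: theta_entry_def cot_def)
    finally show ?thesis
      using 3 T by simp
  qed
qed (simp_all add: bordered_Theta_def)

lemma det_bordered_Theta_of_real:
  assumes "sin (pi * y) \<noteq> 0"
  shows "det (bordered_Theta h n \<theta> (of_real y)) =
           of_real (sin (pi * y) * det (Theta_mat h (Suc n) (\<theta>(n := y))))"
  using det_multrow[of n "Suc n" "map_mat of_real (Theta_mat h (Suc n) (\<theta>(n := y)))"]
  by (simp add: bordered_Theta_of_real[OF assms] Theta_mat_carrier)

lemma det_bordered_Theta_0:
  "det (bordered_Theta h n \<theta> 0) = of_real (det (Theta_mat h n \<theta>) / (4 * h))"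
proof -
  let ?B = "bordered_Theta h n \<theta> 0"
  have "det ?B = (\<Sum>j<Suc n. ?B $$ (n, j) * cofactor ?B n j)"
    by (rule laplace_expansion_row[OF bordered_Theta_carrier]) simp
  also have "\<dots> = ?B $$ (n, n) * det (mat_delete ?B n n)"
    by (simp add: bordered_Theta_def cofactor_def)
  also have "mat_delete ?B n n = map_mat of_real (Theta_mat h n \<theta>)"
    by (rule eq_matI) (auto simp: mat_delete_def bordered_Theta_def Theta_mat_index theta_entry_of_real)
  finally show ?thesis
    by (simp add: bordered_Theta_def)
qed

lemma holomorphic_theta_entry:
  assumes "r \<le> a" and "a < 1"
  shows "(\<lambda>z. theta_entry h (of_real a) z) holomorphic_on ball 0 r"
    and "(\<lambda>z. theta_entry h z (of_real a)) holomorphic_on ball 0 r"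
proof -
  have re: "\<bar>Re z\<bar> < a" if "norm z < r" for z
    using that abs_Re_le_cmod[of z] assms by auto
  show "(\<lambda>z. theta_entry h (of_real a) z) holomorphic_on ball 0 r"
    unfolding theta_entry_def
    by (intro holomorphic_intros holomorphic_on_cot_pi_half)
       (use assms in \<open>auto dest!: re simp: abs_less_iff\<close>)
  show "(\<lambda>z. theta_entry h z (of_real a)) holomorphic_on ball 0 r"
    unfolding theta_entry_def
    by (intro holomorphic_intros holomorphic_on_cot_pi_half)
       (use assms in \<open>auto dest!: re simp: abs_less_iff\<close>)
qed

lemma holomorphic_det_bordered_Theta:
  assumes "\<And>j. j < n \<Longrightarrow> r \<le> \<theta> j \<and> \<theta> j < 1"
  shows "(\<lambda>z. det (bordered_Theta h n \<theta> z)) holomorphic_on ball 0 r"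
proof (rule holomorphic_on_det[OF bordered_Theta_carrier])
  fix i j assume "i < Suc n" "j < Suc n"
  then show "(\<lambda>z. bordered_Theta h n \<theta> z $$ (i, j)) holomorphic_on ball 0 r"
    using assms[of i] assms[of j]
    by (auto simp: bordered_Theta_def less_Suc_eq intro!: holomorphic_intros holomorphic_theta_entry)
qed

lemma countable_singular_slice:
  assumes "h \<noteq> 0" and \<theta>: "\<theta> \<in> theta_domain n" and "det (Theta_mat h n \<theta>) \<noteq> 0"
  shows "countable {y. \<theta>(n := y) \<in> Theta_singular h (Suc n)}"
proof -
  define r where "r = Min (insert 1 (\<theta> ` {..<n}))"
  have \<theta>_bounds: "0 < \<theta> j \<and> \<theta> j < 1" if "j < n" for j
    using \<theta> that unfolding theta_domain_def by auto
  have r_le: "r \<le> \<theta> j" if "j < n" for j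
    unfolding r_def using that by (intro Min_le) auto
  let ?f = "\<lambda>z. det (bordered_Theta h n \<theta> z)"
  have zeros: "countable {z \<in> ball 0 r. ?f z = 0}"
  proof (rule countable_zeros_ball)
    show "?f holomorphic_on ball 0 r"
      using r_le \<theta>_bounds by (intro holomorphic_det_bordered_Theta) auto
    show "?f 0 \<noteq> 0"
      using assms by (simp add: det_bordered_Theta_0)
  qed
  have "complex_of_real ` {y. \<theta>(n := y) \<in> Theta_singular h (Suc n)} \<subseteq> {z \<in> ball 0 r. ?f z = 0}"
  proof clarify
    fix y assume "\<theta>(n := y) \<in> Theta_singular h (Suc n)"
    then have y: "0 < y" "y < 1" "\<forall>j<n. y < \<theta> j"
      and singular: "det (Theta_mat h (Suc n) (\<theta>(n := y))) = 0"
      using theta_domain_Suc_iff[of \<theta> n y] \<theta> unfolding Theta_singular_def theta_domain_def PiE_iff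
      by auto
    have "y < r"
      unfolding r_def using y by simp
    moreover have "sin (pi * y) \<noteq> 0"
      using y sin_gt_zero[of "pi * y"] by simp
    ultimately show "complex_of_real y \<in> ball 0 r \<and> ?f (complex_of_real y) = 0"
      using y singular by (simp add: det_bordered_Theta_of_real)
  qed
  then have "countable (complex_of_real ` {y. \<theta>(n := y) \<in> Theta_singular h (Suc n)})"
    using zeros countable_subset by blast
  then show ?thesis
    by (rule countable_image_inj_on) (simp add: inj_on_def)
qed

lemma Theta_singular_null:
  assumes "h \<noteq> 0"
  shows "Theta_singular h n \<in> null_sets (PiM {..<n} (\<lambda>_. lborel))"
proof (induction n)
  case 0
  have "Theta_mat h 0 \<theta> = 1\<^sub>m 0" for \<theta>
    by (rule eq_matI) simp_all
  then show ?case
    by (simp add: Theta_singular_def det_one)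
next
  case (Suc n)
  show ?case
  proof (rule null_sets_PiM_Suc_sections[OF sigma_finite_lborel sets_Theta_singular])
    show "AE \<theta> in PiM {..<n} (\<lambda>_. lborel).
        {y \<in> space lborel. \<theta>(n := y) \<in> Theta_singular h (Suc n)} \<in> null_sets lborel"
      using AE_not_in[OF Suc.IH] AE_space
    proof eventually_elim
      case (elim \<theta>)
      then have ext: "\<theta> \<in> extensional {..<n}"
        by (simp add: space_PiM PiE_iff)
      show ?case
      proof (cases "\<theta> \<in> theta_domain n")
        case True
        with elim have "det (Theta_mat h n \<theta>) \<noteq> 0"
          by (simp add: Theta_singular_def)
        with assms True show ?thesis
          by (simp add: countable_imp_null_set_lborel countable_singular_slice)
      next
        case False
        then show ?thesis
          using theta_domain_Suc_iff[OF ext] by (simp add: Theta_singular_def)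
      qed
    qed
  qed
qed

theorem theorem5p3:
  fixes h :: real and n :: nat
  assumes "h > 0" and "n \<ge> 1"
  shows "{\<theta> \<in> theta_domain n. \<not> invertible_mat (Theta_mat h n \<theta>)}
           \<in> null_sets (PiM {..<n} (\<lambda>_. lborel))"
proof -
  have "{\<theta> \<in> theta_domain n. \<not> invertible_mat (Theta_mat h n \<theta>)} = Theta_singular h n"
    unfolding Theta_singular_def
    using invertible_mat_iff_det_nonzero[OF Theta_mat_carrier] by blast
  with Theta_singular_null[of h n] assms(1) show ?thesis
    by simp
qed

end
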